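(* Every knot diagram $k \in \mathbb{CC}$ is equal, via the axioms of braided monoidal categories, to a knot diagram in bridge position, i.e.\ one whose string diagram has all of its caps appearing above all of its cups.
   Context: $\mathbb{CC}$ is the free (strict) braided monoidal category generated by objects $\uparrow, \downarrow$ and four generating morphisms, with no equations imposed between them: caps $\mathrm{cap}_r : I \to \uparrow \otimes \downarrow$, $\mathrm{cap}_l : I \to \downarrow \otimes \uparrow$ and cups $\mathrm{cup}_r : \downarrow \otimes \uparrow \to I$, $\mathrm{cup}_l : \uparrow \otimes \downarrow \to I$. String diagrams are read from top (domain) to bottom (codomain). A knot (diagram) in $\mathbb{CC}$ is a morphism $I \to I$ whose string diagram has a single connected component. *)

theory Defs
  imports Main
begin

text \<open>Objects of CC: lists of orientations (strict monoidal: tensor = append, unit = []).\<close>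
datatype ori = Up | Down
type_synonym obj = "ori list"

datatype gen = CapR | CapL | CupR | CupL

fun gdom :: "gen \<Rightarrow> obj" where
  "gdom CapR = []" | "gdom CapL = []" | "gdom CupR = [Down, Up]" | "gdom CupL = [Up, Down]"

fun gcod :: "gen \<Rightarrow> obj" where
  "gcod CapR = [Up, Down]" | "gcod CapL = [Down, Up]" | "gcod CupR = []" | "gcod CupL = []"

text \<open>Raw morphism terms of the free strict braided monoidal category.
  Comp f g is "f then g" (f on top, g below).\<close>
datatype trm = Id obj | Gen gen | Br obj obj | BrInv obj obj | Comp trm trm | Tens trm trm

inductive typed :: "trm \<Rightarrow> obj \<Rightarrow> obj \<Rightarrow> bool" where
  "typed (Id A) A A"
| "typed (Gen g) (gdom g) (gcod g)"
| "typed (Br A B) (A @ B) (B @ A)"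
| "typed (BrInv A B) (B @ A) (A @ B)"
| "typed f A B \<Longrightarrow> typed g B C \<Longrightarrow> typed (Comp f g) A C"
| "typed f A B \<Longrightarrow> typed g C D \<Longrightarrow> typed (Tens f g) (A @ C) (B @ D)"

inductive eqv :: "trm \<Rightarrow> trm \<Rightarrow> bool" where
  refl: "typed f A B \<Longrightarrow> eqv f f"
| sym: "eqv f g \<Longrightarrow> eqv g f"
| trans: "eqv f g \<Longrightarrow> eqv g h \<Longrightarrow> eqv f h"
| comp_cong: "eqv f f' \<Longrightarrow> eqv g g' \<Longrightarrow> typed f A B \<Longrightarrow> typed g B C \<Longrightarrow>
     typed f' A B \<Longrightarrow> typed g' B C \<Longrightarrow> eqv (Comp f g) (Comp f' g')"
| tens_cong: "eqv f f' \<Longrightarrow> eqv g g' \<Longrightarrow> typed f A B \<Longrightarrow> typed g C D \<Longrightarrow>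
     typed f' A B \<Longrightarrow> typed g' C D \<Longrightarrow> eqv (Tens f g) (Tens f' g')"
| id_left: "typed f A B \<Longrightarrow> eqv (Comp (Id A) f) f"
| id_right: "typed f A B \<Longrightarrow> eqv (Comp f (Id B)) f"
| comp_assoc: "typed f A B \<Longrightarrow> typed g B C \<Longrightarrow> typed h C D \<Longrightarrow>
     eqv (Comp (Comp f g) h) (Comp f (Comp g h))"
| tens_id: "eqv (Tens (Id A) (Id B)) (Id (A @ B))"
| tens_unit_left: "typed f A B \<Longrightarrow> eqv (Tens (Id []) f) f"
| tens_unit_right: "typed f A B \<Longrightarrow> eqv (Tens f (Id [])) f"
| tens_assoc: "typed f A B \<Longrightarrow> typed g C D \<Longrightarrow> typed h E F \<Longrightarrow>
     eqv (Tens (Tens f g) h) (Tens f (Tens g h))"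
| interchange: "typed f A B \<Longrightarrow> typed g B C \<Longrightarrow> typed h D E \<Longrightarrow> typed k E F \<Longrightarrow>
     eqv (Tens (Comp f g) (Comp h k)) (Comp (Tens f h) (Tens g k))"
| br_inv1: "eqv (Comp (Br A B) (BrInv A B)) (Id (A @ B))"
| br_inv2: "eqv (Comp (BrInv A B) (Br A B)) (Id (B @ A))"
| br_nat: "typed f A A' \<Longrightarrow> typed g B B' \<Longrightarrow>
     eqv (Comp (Tens f g) (Br A' B')) (Comp (Br A B) (Tens g f))"
| hex1: "eqv (Br A (B @ C)) (Comp (Tens (Br A B) (Id C)) (Tens (Id B) (Br A C)))"
| hex2: "eqv (Br (A @ B) C) (Comp (Tens (Id A) (Br B C)) (Tens (Br A C) (Id B)))"

text \<open>Syntactic domain/codomain (only meaningful for typed terms).\<close>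
fun tdom :: "trm \<Rightarrow> obj" and tcod :: "trm \<Rightarrow> obj" where
  "tdom (Id A) = A" | "tdom (Gen g) = gdom g" | "tdom (Br A B) = A @ B"
| "tdom (BrInv A B) = B @ A" | "tdom (Comp f g) = tdom f" | "tdom (Tens f g) = tdom f @ tdom g"
| "tcod (Id A) = A" | "tcod (Gen g) = gcod g" | "tcod (Br A B) = B @ A"
| "tcod (BrInv A B) = A @ B" | "tcod (Comp f g) = tcod g" | "tcod (Tens f g) = tcod f @ tcod g"

text \<open>The underlying string diagram as a graph: (number of wire segments,
  map domain positions \<rightarrow> segments, map codomain positions \<rightarrow> segments,
  edges joining segments). Segments are 0..<n. Crossings do not join strands.\<close>
fun diag :: "trm \<Rightarrow> nat \<times> (nat \<Rightarrow> nat) \<times> (nat \<Rightarrow> nat) \<times> (nat \<times> nat) set" where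
  "diag (Id A) = (length A, id, id, {})"
| "diag (Gen g) = (1, \<lambda>_. 0, \<lambda>_. 0, {})"
| "diag (Br A B) = (length A + length B, id,
     \<lambda>j. if j < length B then length A + j else j - length B, {})"
| "diag (BrInv A B) = (length A + length B,
     \<lambda>j. if j < length B then length A + j else j - length B, id, {})"
| "diag (Comp f g) = (case diag f of (n1, d1, c1, E1) \<Rightarrow> case diag g of (n2, d2, c2, E2) \<Rightarrow>
     (n1 + n2, d1, \<lambda>j. n1 + c2 j,
      E1 \<union> {(n1 + a, n1 + b) | a b. (a, b) \<in> E2}
         \<union> {(c1 j, n1 + d2 j) | j. j < length (tcod f)}))"
| "diag (Tens f g) = (case diag f of (n1, d1, c1, E1) \<Rightarrow> case diag g of (n2, d2, c2, E2) \<Rightarrow>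
     (n1 + n2,
      \<lambda>j. if j < length (tdom f) then d1 j else n1 + d2 (j - length (tdom f)),
      \<lambda>j. if j < length (tcod f) then c1 j else n1 + c2 (j - length (tcod f)),
      E1 \<union> {(n1 + a, n1 + b) | a b. (a, b) \<in> E2}))"

definition knot :: "trm \<Rightarrow> bool" where
  "knot k \<longleftrightarrow> typed k [] [] \<and>
     (case diag k of (n, _, _, E) \<Rightarrow>
        0 < n \<and> (\<forall>a < n. \<forall>b < n. (a, b) \<in> (E \<union> E\<inverse>)\<^sup>*))"

fun gens :: "trm \<Rightarrow> gen set" where
  "gens (Gen g) = {g}"
| "gens (Comp f g) = gens f \<union> gens g"
| "gens (Tens f g) = gens f \<union> gens g"
| "gens _ = {}"

definition bridge_position :: "trm \<Rightarrow> bool" where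
  "bridge_position k \<longleftrightarrow> (\<exists>c b A. k = Comp c b \<and> typed c [] A \<and> typed b A [] \<and>
     gens c \<inter> {CupR, CupL} = {} \<and> gens b \<inter> {CapR, CapL} = {})"

end

theory Submission
  imports Defs
begin

(*
  Every term can be rewritten, using only the unit, associativity and interchange laws and the
  naturality and invertibility of the braiding, into the form (id \<otimes> C) ; R with a cup-free
  C : I \<rightarrow> X on top and a cap-free R below.  By induction on the term: in a composite f ; g the caps
  of g slide up past f by interchange, and a tensor product f \<otimes> g is split as (f \<otimes> id) ; (id \<otimes> g),
  where the caps of f are carried across the parallel strands by naturality of the braiding.

  Equality in CC is not obviously compatible with being a knot, so every axiom instance used is
  also checked on string diagrams: there are maps between the wire segments of the two sides, in
  both directions, that send edges and boundary points to connected pairs and reach every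
  component.  Such maps preserve connectedness, so the rewritten term is again a knot.
*)

fun welltyped :: "trm \<Rightarrow> bool" where
  "welltyped (Comp f g) \<longleftrightarrow> welltyped f \<and> welltyped g \<and> tcod f = tdom g"
| "welltyped (Tens f g) \<longleftrightarrow> welltyped f \<and> welltyped g"
| "welltyped _ \<longleftrightarrow> True"

lemma typed_iff_welltyped: "typed t A B \<longleftrightarrow> welltyped t \<and> tdom t = A \<and> tcod t = B"
proof
  show "typed t A B \<Longrightarrow> welltyped t \<and> tdom t = A \<and> tcod t = B"
    by (induction rule: typed.induct) auto
  show "welltyped t \<and> tdom t = A \<and> tcod t = B \<Longrightarrow> typed t A B"
    by (induction t arbitrary: A B) (auto intro: typed.intros)
qed

section \<open>String diagrams of terms\<close>

definition nseg :: "trm \<Rightarrow> nat" where "nseg t = fst (diag t)"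

definition dseg :: "trm \<Rightarrow> nat \<Rightarrow> nat" where "dseg t = fst (snd (diag t))"

definition cseg :: "trm \<Rightarrow> nat \<Rightarrow> nat" where "cseg t = fst (snd (snd (diag t)))"

definition edges :: "trm \<Rightarrow> (nat \<times> nat) set" where "edges t = snd (snd (snd (diag t)))"

definition shift :: "nat \<Rightarrow> (nat \<times> nat) set \<Rightarrow> (nat \<times> nat) set" where
  "shift k E = {(k + a, k + b) | a b. (a, b) \<in> E}"

lemma shift_empty [simp]: "shift k {} = {}"
  by (simp add: shift_def)

lemma shift_0 [simp]: "shift 0 E = E"
  by (simp add: shift_def)

lemma shift_Un: "shift k (A \<union> B) = shift k A \<union> shift k B"
  by (auto simp: shift_def)

lemma shift_shift: "shift k (shift m E) = shift (k + m) E"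
  by (auto simp: shift_def add.assoc)

lemma shift_pairs: "shift k {(p j, q j) | j. P j} = {(k + p j, k + q j) | j. P j}"
  by (auto simp: shift_def)

lemma image_shift:
  assumes "\<forall>(a, b) \<in> E. a < n \<and> b < n" and "\<And>x. x < n \<Longrightarrow> \<phi> (k + x) = k' + x"
  shows "map_prod \<phi> \<phi> ` shift k E = shift k' E"
proof -
  have "map_prod \<phi> \<phi> ` shift k E = map_prod \<phi> \<phi> ` map_prod ((+) k) ((+) k) ` E"
    by (auto simp: shift_def)
  also have "\<dots> = map_prod ((+) k') ((+) k') ` E"
    unfolding image_image using assms by (intro image_cong) auto
  also have "\<dots> = shift k' E"
    by (auto simp: shift_def)
  finally show ?thesis .
qed

lemma image_pairs:
  assumes "\<And>j. P j \<Longrightarrow> \<phi> (p j) = p' j" and "\<And>j. P j \<Longrightarrow> \<phi> (q j) = q' j"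
  shows "map_prod \<phi> \<phi> ` {(p j, q j) | j. P j} = {(p' j, q' j) | j. P j}"
  using assms by force

lemma pairs_less_add:
  "{(p j, q j) | j :: nat. j < a + b} = {(p j, q j) | j. j < a} \<union> {(p (a + j), q (a + j)) | j. j < b}"
proof (intro set_eqI iffI)
  fix e assume "e \<in> {(p j, q j) | j. j < a + b}"
  then obtain j where e: "e = (p j, q j)" "j < a + b" by blast
  show "e \<in> {(p j, q j) | j. j < a} \<union> {(p (a + j), q (a + j)) | j. j < b}"
  proof (cases "j < a")
    case True
    with e show ?thesis by blast
  next
    case False
    with e have "e = (p (a + (j - a)), q (a + (j - a)))" "j - a < b" by simp_all
    then show ?thesis by blast
  qed
qed auto

lemma diag_eq: "diag t = (nseg t, dseg t, cseg t, edges t)"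
  by (simp add: nseg_def dseg_def cseg_def edges_def)

lemma diag_Comp_eq:
  "diag (Comp f g) = (nseg f + nseg g, dseg f, \<lambda>j. nseg f + cseg g j,
     edges f \<union> shift (nseg f) (edges g) \<union> {(cseg f j, nseg f + dseg g j) | j. j < length (tcod f)})"
  by (simp only: diag.simps diag_eq[of f] diag_eq[of g]) (simp add: shift_def)

lemma diag_Tens_eq:
  "diag (Tens f g) = (nseg f + nseg g,
     \<lambda>j. if j < length (tdom f) then dseg f j else nseg f + dseg g (j - length (tdom f)),
     \<lambda>j. if j < length (tcod f) then cseg f j else nseg f + cseg g (j - length (tcod f)),
     edges f \<union> shift (nseg f) (edges g))"
  by (simp only: diag.simps diag_eq[of f] diag_eq[of g]) (simp add: shift_def)

lemma diag_Comp:
  "nseg (Comp f g) = nseg f + nseg g"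
  "dseg (Comp f g) = dseg f"
  "cseg (Comp f g) = (\<lambda>j. nseg f + cseg g j)"
  "edges (Comp f g) = edges f \<union> shift (nseg f) (edges g)
     \<union> {(cseg f j, nseg f + dseg g j) | j. j < length (tcod f)}"
  by (simp_all only: nseg_def dseg_def cseg_def edges_def diag_Comp_eq fst_conv snd_conv)

lemma diag_Tens:
  "nseg (Tens f g) = nseg f + nseg g"
  "dseg (Tens f g) =
     (\<lambda>j. if j < length (tdom f) then dseg f j else nseg f + dseg g (j - length (tdom f)))"
  "cseg (Tens f g) =
     (\<lambda>j. if j < length (tcod f) then cseg f j else nseg f + cseg g (j - length (tcod f)))"
  "edges (Tens f g) = edges f \<union> shift (nseg f) (edges g)"
  by (simp_all only: nseg_def dseg_def cseg_def edges_def diag_Tens_eq fst_conv snd_conv)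

lemma diag_atoms:
  "nseg (Id A) = length A" "dseg (Id A) = id" "cseg (Id A) = id" "edges (Id A) = {}"
  "nseg (Gen g) = 1" "dseg (Gen g) = (\<lambda>_. 0)" "cseg (Gen g) = (\<lambda>_. 0)" "edges (Gen g) = {}"
  "nseg (Br A B) = length A + length B" "dseg (Br A B) = id"
  "cseg (Br A B) = (\<lambda>j. if j < length B then length A + j else j - length B)"
  "edges (Br A B) = {}"
  "nseg (BrInv A B) = length A + length B"
  "dseg (BrInv A B) = (\<lambda>j. if j < length B then length A + j else j - length B)"
  "cseg (BrInv A B) = id" "edges (BrInv A B) = {}"
  by (simp_all add: nseg_def dseg_def cseg_def edges_def)

lemmas diag_simps = diag_Comp diag_Tens diag_atoms

lemma diag_bounded:
  "welltyped t \<Longrightarrow> (\<forall>j < length (tdom t). dseg t j < nseg t) \<and> (\<forall>j < length (tcod t). cseg t j < nseg t)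
    \<and> (\<forall>(a, b) \<in> edges t. a < nseg t \<and> b < nseg t)"
proof (induction t)
  case (Comp f g)
  then show ?case by (auto simp: diag_simps shift_def)
next
  case (Tens f g)
  then show ?case by (auto simp: diag_simps shift_def)
qed (auto simp: diag_simps)

lemma
  assumes "welltyped t"
  shows dseg_less: "j < length (tdom t) \<Longrightarrow> dseg t j < nseg t"
    and cseg_less: "j < length (tcod t) \<Longrightarrow> cseg t j < nseg t"
    and edges_less: "(a, b) \<in> edges t \<Longrightarrow> a < nseg t \<and> b < nseg t"
  using diag_bounded[OF assms] by blast+

lemma edges_Tens_Comp_Comp:
  "edges (Tens (Comp f g) (Comp h k)) = edges f \<union> shift (nseg f) (edges g)
    \<union> shift (nseg f + nseg g) (edges h) \<union> shift (nseg f + nseg g + nseg h) (edges k)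
    \<union> {(cseg f j, nseg f + dseg g j) | j. j < length (tcod f)}
    \<union> {(nseg f + nseg g + cseg h j, nseg f + nseg g + nseg h + dseg k j) | j. j < length (tcod h)}"
  by (simp add: diag_simps shift_Un shift_shift shift_pairs add.assoc Un_ac)

lemma edges_Comp_Tens_Tens:
  assumes "tcod f = tdom g" "tcod h = tdom k"
  shows "edges (Comp (Tens f h) (Tens g k)) = edges f \<union> shift (nseg f + nseg h) (edges g)
    \<union> shift (nseg f) (edges h) \<union> shift (nseg f + nseg h + nseg g) (edges k)
    \<union> {(cseg f j, nseg f + nseg h + dseg g j) | j. j < length (tcod f)}
    \<union> {(nseg f + cseg h j, nseg f + nseg h + nseg g + dseg k j) | j. j < length (tcod h)}"
proof -
  have "{(cseg (Tens f h) j, nseg (Tens f h) + dseg (Tens g k) j) | j. j < length (tcod (Tens f h))}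
    = {(cseg f j, nseg f + nseg h + dseg g j) | j. j < length (tcod f)}
      \<union> {(nseg f + cseg h j, nseg f + nseg h + nseg g + dseg k j) | j. j < length (tcod h)}"
    unfolding tcod.simps length_append pairs_less_add
    using assms by (auto simp: diag_Tens add.assoc)
  then show ?thesis
    by (simp add: diag_Comp diag_Tens shift_Un shift_shift add.assoc Un_ac)
qed

section \<open>Connectivity\<close>

definition conn :: "'a rel \<Rightarrow> 'a rel" where
  "conn E = (E \<union> E\<inverse>)\<^sup>*"

lemma conn_refl [simp]: "(a, a) \<in> conn E"
  by (simp add: conn_def)

lemma conn_edge: "(a, b) \<in> E \<Longrightarrow> (a, b) \<in> conn E"
  by (auto simp: conn_def)

lemma conn_edge_converse: "(b, a) \<in> E \<Longrightarrow> (a, b) \<in> conn E"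
  by (auto simp: conn_def)

lemma conn_trans: "(a, b) \<in> conn E \<Longrightarrow> (b, c) \<in> conn E \<Longrightarrow> (a, c) \<in> conn E"
  by (auto simp: conn_def)

lemma conn_sym: "(a, b) \<in> conn E \<Longrightarrow> (b, a) \<in> conn E"
  using sym_rtrancl[OF sym_Un_converse[of E]] unfolding conn_def by (rule symD)

lemma conn_mono: "(a, b) \<in> conn E \<Longrightarrow> E \<subseteq> F \<Longrightarrow> (a, b) \<in> conn F"
  unfolding conn_def by (metis Un_mono converse_mono rtrancl_mono subsetD)

lemma conn_image:
  assumes "\<forall>(a, b) \<in> E. (f a, f b) \<in> conn F" and "(a, b) \<in> conn E"
  shows "(f a, f b) \<in> conn F"
proof -
  have "(a, b) \<in> (E \<union> E\<inverse>)\<^sup>*" using assms(2) by (simp add: conn_def)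
  then show ?thesis
  proof (induction rule: rtrancl_induct)
    case (step b c)
    then consider "(b, c) \<in> E" | "(c, b) \<in> E" by blast
    then have "(f b, f c) \<in> conn F"
      by cases (use assms(1) conn_sym in fast)+
    with step.IH show ?case by (rule conn_trans)
  qed simp
qed

lemma conn_shift: "(a, b) \<in> conn E \<Longrightarrow> (k + a, k + b) \<in> conn (shift k E)"
  by (rule conn_image[of E "(+) k"]) (auto simp: shift_def intro: conn_edge)

definition component_map :: "nat \<Rightarrow> (nat \<times> nat) set \<Rightarrow> nat \<Rightarrow> (nat \<times> nat) set \<Rightarrow> (nat \<Rightarrow> nat) \<Rightarrow> bool"
  where "component_map n E n' E' \<phi> \<longleftrightarrow> (\<forall>x < n. \<phi> x < n')
    \<and> (\<forall>(a, b) \<in> E. (\<phi> a, \<phi> b) \<in> conn E') \<and> (\<forall>y < n'. \<exists>x < n. (y, \<phi> x) \<in> conn E')"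

lemma component_mapI:
  assumes "\<And>x. x < n \<Longrightarrow> \<phi> x < n'"
    and "\<And>a b. (a, b) \<in> E \<Longrightarrow> (\<phi> a, \<phi> b) \<in> conn E'"
    and "\<And>y. y < n' \<Longrightarrow> \<exists>x < n. (y, \<phi> x) \<in> conn E'"
  shows "component_map n E n' E' \<phi>"
  using assms unfolding component_map_def by blast

lemma component_mapD:
  assumes "component_map n E n' E' \<phi>"
  shows "x < n \<Longrightarrow> \<phi> x < n'"
    and "(a, b) \<in> conn E \<Longrightarrow> (\<phi> a, \<phi> b) \<in> conn E'"
    and "y < n' \<Longrightarrow> \<exists>x < n. (y, \<phi> x) \<in> conn E'"
  using assms conn_image[of E \<phi> E'] unfolding component_map_def by blast+

lemma component_map_id: "component_map n E n E id"
  by (rule component_mapI) (auto intro: conn_edge)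

lemma component_map_comp:
  assumes "component_map n1 E1 n2 E2 \<phi>" and "component_map n2 E2 n3 E3 \<psi>"
  shows "component_map n1 E1 n3 E3 (\<psi> \<circ> \<phi>)"
proof (rule component_mapI)
  fix y assume "y < n3"
  then obtain x' where "x' < n2" "(y, \<psi> x') \<in> conn E3"
    using component_mapD(3)[OF assms(2)] by blast
  moreover from \<open>x' < n2\<close> obtain x where "x < n1" "(x', \<phi> x) \<in> conn E2"
    using component_mapD(3)[OF assms(1)] by blast
  ultimately show "\<exists>x < n1. (y, (\<psi> \<circ> \<phi>) x) \<in> conn E3"
    using component_mapD(2)[OF assms(2)] conn_trans by fastforce
qed (use assms in \<open>auto simp: component_map_def intro: component_mapD(2)[OF assms(2)]\<close>)

lemma component_map_connected:
  assumes "component_map n E n' E' \<phi>" and "\<forall>a < n. \<forall>b < n. (a, b) \<in> conn E"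
  shows "\<forall>a < n'. \<forall>b < n'. (a, b) \<in> conn E'"
proof (intro allI impI)
  fix a b assume "a < n'" "b < n'"
  then obtain x y where "x < n" "(a, \<phi> x) \<in> conn E'" "y < n" "(b, \<phi> y) \<in> conn E'"
    using component_mapD(3)[OF assms(1)] by meson
  moreover have "(\<phi> x, \<phi> y) \<in> conn E'"
    using component_mapD(2)[OF assms(1)] assms(2) \<open>x < n\<close> \<open>y < n\<close> by blast
  ultimately show "(a, b) \<in> conn E'"
    using conn_trans conn_sym by meson
qed

lemma component_map_juxtapose:
  assumes "component_map n1 E1 n1' E1' \<phi>1" and "component_map n2 E2 n2' E2' \<phi>2"
    and "\<forall>(a, b) \<in> E1. a < n1 \<and> b < n1"
  shows "component_map (n1 + n2) (E1 \<union> shift n1 E2) (n1' + n2') (E1' \<union> shift n1' E2')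
    (\<lambda>x. if x < n1 then \<phi>1 x else n1' + \<phi>2 (x - n1))"
    (is "component_map _ _ _ ?E' ?\<phi>")
proof (rule component_mapI)
  have left: "(a, b) \<in> conn E1' \<Longrightarrow> (a, b) \<in> conn ?E'" for a b
    by (rule conn_mono) auto
  have right: "(a, b) \<in> conn E2' \<Longrightarrow> (n1' + a, n1' + b) \<in> conn ?E'" for a b
    by (rule conn_mono[OF conn_shift]) auto
  show "?\<phi> x < n1' + n2'" if "x < n1 + n2" for x
    using that component_mapD(1)[OF assms(1), of x] component_mapD(1)[OF assms(2), of "x - n1"] by auto
  show "(?\<phi> a, ?\<phi> b) \<in> conn ?E'" if "(a, b) \<in> E1 \<union> shift n1 E2" for a b
  proof (cases "(a, b) \<in> E1")
    case True
    then have "(\<phi>1 a, \<phi>1 b) \<in> conn E1'"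
      by (intro component_mapD(2)[OF assms(1)] conn_edge)
    with True assms(3) left show ?thesis by auto
  next
    case False
    with that obtain a0 b0 where "(a0, b0) \<in> E2" "a = n1 + a0" "b = n1 + b0"
      by (auto simp: shift_def)
    then show ?thesis
      using right[OF component_mapD(2)[OF assms(2) conn_edge]] by auto
  qed
  show "\<exists>x < n1 + n2. (y, ?\<phi> x) \<in> conn ?E'" if "y < n1' + n2'" for y
  proof (cases "y < n1'")
    case True
    then obtain x where "x < n1" "(y, \<phi>1 x) \<in> conn E1'"
      using component_mapD(3)[OF assms(1)] by blast
    with left show ?thesis by (intro exI[of _ x]) auto
  next
    case False
    with that have "y - n1' < n2'" by linarith
    then obtain x where "x < n2" "(y - n1', \<phi>2 x) \<in> conn E2'"
      using component_mapD(3)[OF assms(2)] by blast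
    with right[of "y - n1'"] False show ?thesis by (intro exI[of _ "n1 + x"]) auto
  qed
qed

lemma component_map_Un:
  assumes "component_map n E n' E' \<phi>" and "\<forall>(a, b) \<in> F. (\<phi> a, \<phi> b) \<in> conn (E' \<union> F')"
  shows "component_map n (E \<union> F) n' (E' \<union> F') \<phi>"
  using assms conn_mono[of _ _ E' "E' \<union> F'"] unfolding component_map_def by blast

section \<open>Simulations between string diagrams\<close>

definition sim_map :: "trm \<Rightarrow> trm \<Rightarrow> (nat \<Rightarrow> nat) \<Rightarrow> bool" where
  "sim_map t t' \<phi> \<longleftrightarrow> component_map (nseg t) (edges t) (nseg t') (edges t') \<phi>
    \<and> (\<forall>j < length (tdom t). (\<phi> (dseg t j), dseg t' j) \<in> conn (edges t'))
    \<and> (\<forall>j < length (tcod t). (\<phi> (cseg t j), cseg t' j) \<in> conn (edges t'))"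

definition diag_sim :: "trm \<Rightarrow> trm \<Rightarrow> bool" where
  "diag_sim t t' \<longleftrightarrow> welltyped t \<and> welltyped t' \<and> tdom t = tdom t' \<and> tcod t = tcod t'
    \<and> (\<exists>\<phi>. sim_map t t' \<phi>)"

lemma sim_mapD:
  assumes "sim_map t t' \<phi>"
  shows "component_map (nseg t) (edges t) (nseg t') (edges t') \<phi>"
    and "j < length (tdom t) \<Longrightarrow> (\<phi> (dseg t j), dseg t' j) \<in> conn (edges t')"
    and "j < length (tcod t) \<Longrightarrow> (\<phi> (cseg t j), cseg t' j) \<in> conn (edges t')"
  using assms unfolding sim_map_def by blast+

lemma diag_simI:
  assumes "welltyped t" "welltyped t'" "tdom t = tdom t'" "tcod t = tcod t'"
    and "component_map (nseg t) (edges t) (nseg t') (edges t') \<phi>"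
    and "\<And>j. j < length (tdom t) \<Longrightarrow> (\<phi> (dseg t j), dseg t' j) \<in> conn (edges t')"
    and "\<And>j. j < length (tcod t) \<Longrightarrow> (\<phi> (cseg t j), cseg t' j) \<in> conn (edges t')"
  shows "diag_sim t t'"
  using assms unfolding diag_sim_def sim_map_def by blast

lemma diag_simE:
  assumes "diag_sim t t'"
  obtains \<phi> where "welltyped t" "welltyped t'" "tdom t = tdom t'" "tcod t = tcod t'"
    and "sim_map t t' \<phi>"
  using assms unfolding diag_sim_def by blast

lemma diag_sim_welltyped:
  "diag_sim t t' \<Longrightarrow> welltyped t \<and> welltyped t' \<and> tdom t = tdom t' \<and> tcod t = tcod t'"
  unfolding diag_sim_def by (elim conjE) (intro conjI)

lemma diag_sim_refl: "welltyped t \<Longrightarrow> diag_sim t t"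
  by (rule diag_simI[where \<phi> = id]) (simp_all add: component_map_id)

lemma diag_sim_trans:
  assumes "diag_sim t1 t2" and "diag_sim t2 t3"
  shows "diag_sim t1 t3"
proof -
  obtain \<phi> where t12: "welltyped t1" "welltyped t2" "tdom t1 = tdom t2" "tcod t1 = tcod t2"
    and \<phi>: "sim_map t1 t2 \<phi>"
    using assms(1) by (rule diag_simE)
  note \<phi> = sim_mapD[OF \<phi>]
  obtain \<psi> where t23: "welltyped t2" "welltyped t3" "tdom t2 = tdom t3" "tcod t2 = tcod t3"
    and \<psi>: "sim_map t2 t3 \<psi>"
    using assms(2) by (rule diag_simE)
  note \<psi> = sim_mapD[OF \<psi>]
  show ?thesis
  proof (rule diag_simI[OF _ _ _ _ component_map_comp[OF \<phi>(1) \<psi>(1)]])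
    fix j assume "j < length (tdom t1)"
    then show "((\<psi> \<circ> \<phi>) (dseg t1 j), dseg t3 j) \<in> conn (edges t3)"
      using component_mapD(2)[OF \<psi>(1) \<phi>(2)] \<psi>(2) t12 by (auto intro: conn_trans)
  next
    fix j assume "j < length (tcod t1)"
    then show "((\<psi> \<circ> \<phi>) (cseg t1 j), cseg t3 j) \<in> conn (edges t3)"
      using component_mapD(2)[OF \<psi>(1) \<phi>(3)] \<psi>(3) t12 by (auto intro: conn_trans)
  qed (use t12 t23 in auto)
qed

lemma knot_iff:
  "knot k \<longleftrightarrow> typed k [] [] \<and> 0 < nseg k \<and> (\<forall>a < nseg k. \<forall>b < nseg k. (a, b) \<in> conn (edges k))"
  by (simp add: knot_def diag_eq conn_def)

lemma knot_diag_sim: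
  assumes "knot k" and "diag_sim k k'"
  shows "knot k'"
proof -
  obtain \<phi> where k': "welltyped k" "welltyped k'" "tdom k = tdom k'" "tcod k = tcod k'"
    and \<phi>: "sim_map k k' \<phi>"
    using assms(2) by (rule diag_simE)
  note \<phi> = sim_mapD(1)[OF \<phi>]
  have "typed k' [] []"
    using assms(1) k' by (simp add: knot_iff typed_iff_welltyped)
  moreover have "0 < nseg k'"
    using component_mapD(1)[OF \<phi>, of 0] assms(1) by (auto simp: knot_iff)
  moreover have "\<forall>a < nseg k'. \<forall>b < nseg k'. (a, b) \<in> conn (edges k')"
    using component_map_connected[OF \<phi>] assms(1) by (simp add: knot_iff)
  ultimately show ?thesis
    by (simp add: knot_iff)
qed

lemma diag_sim_Tens:
  assumes "diag_sim f f'" and "diag_sim g g'"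
  shows "diag_sim (Tens f g) (Tens f' g')"
proof -
  obtain \<phi>1 where f: "welltyped f" "welltyped f'" "tdom f = tdom f'" "tcod f = tcod f'"
    and \<phi>1: "sim_map f f' \<phi>1"
    using assms(1) by (rule diag_simE)
  note \<phi>1 = sim_mapD[OF \<phi>1]
  obtain \<phi>2 where g: "welltyped g" "welltyped g'" "tdom g = tdom g'" "tcod g = tcod g'"
    and \<phi>2: "sim_map g g' \<phi>2"
    using assms(2) by (rule diag_simE)
  note \<phi>2 = sim_mapD[OF \<phi>2]
  let ?\<phi> = "\<lambda>x. if x < nseg f then \<phi>1 x else nseg f' + \<phi>2 (x - nseg f)"
  let ?E' = "edges (Tens f' g')"
  have left: "(a, b) \<in> conn (edges f') \<Longrightarrow> (a, b) \<in> conn ?E'" for a b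
    by (rule conn_mono) (auto simp: diag_simps)
  have right: "(a, b) \<in> conn (edges g') \<Longrightarrow> (nseg f' + a, nseg f' + b) \<in> conn ?E'" for a b
    by (rule conn_mono[OF conn_shift]) (auto simp: diag_simps)
  show ?thesis
  proof (rule diag_simI)
    show "component_map (nseg (Tens f g)) (edges (Tens f g)) (nseg (Tens f' g')) ?E' ?\<phi>"
      unfolding diag_Tens using component_map_juxtapose[OF \<phi>1(1) \<phi>2(1)] edges_less[OF f(1)]
      by blast
    fix j
    show "j < length (tdom (Tens f g)) \<Longrightarrow> (?\<phi> (dseg (Tens f g) j), dseg (Tens f' g') j) \<in> conn ?E'"
      using left[OF \<phi>1(2)] right[OF \<phi>2(2)] dseg_less[OF f(1)] f g
      by (auto simp: diag_Tens)
    show "j < length (tcod (Tens f g)) \<Longrightarrow> (?\<phi> (cseg (Tens f g) j), cseg (Tens f' g') j) \<in> conn ?E'"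
      using left[OF \<phi>1(3)] right[OF \<phi>2(3)] cseg_less[OF f(1)] f g
      by (auto simp: diag_Tens)
  qed (use f g in auto)
qed

lemma diag_sim_Comp:
  assumes "diag_sim f f'" and "diag_sim g g'" and "tcod f = tdom g"
  shows "diag_sim (Comp f g) (Comp f' g')"
proof -
  obtain \<phi>1 where f: "welltyped f" "welltyped f'" "tdom f = tdom f'" "tcod f = tcod f'"
    and \<phi>1: "sim_map f f' \<phi>1"
    using assms(1) by (rule diag_simE)
  note \<phi>1 = sim_mapD[OF \<phi>1]
  obtain \<phi>2 where g: "welltyped g" "welltyped g'" "tdom g = tdom g'" "tcod g = tcod g'"
    and \<phi>2: "sim_map g g' \<phi>2"
    using assms(2) by (rule diag_simE)
  note \<phi>2 = sim_mapD[OF \<phi>2]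
  let ?\<phi> = "\<lambda>x. if x < nseg f then \<phi>1 x else nseg f' + \<phi>2 (x - nseg f)"
  let ?E' = "edges (Comp f' g')"
  have left: "(a, b) \<in> conn (edges f') \<Longrightarrow> (a, b) \<in> conn ?E'" for a b
    by (rule conn_mono) (auto simp: diag_simps)
  have right: "(a, b) \<in> conn (edges g') \<Longrightarrow> (nseg f' + a, nseg f' + b) \<in> conn ?E'" for a b
    by (rule conn_mono[OF conn_shift]) (auto simp: diag_simps)
  have glued: "\<forall>(a, b) \<in> {(cseg f j, nseg f + dseg g j) | j. j < length (tcod f)}.
      (?\<phi> a, ?\<phi> b) \<in> conn ?E'"
  proof (clarify)
    fix j assume j: "j < length (tcod f)"
    have "(\<phi>1 (cseg f j), cseg f' j) \<in> conn ?E'"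
      using left[OF \<phi>1(3)] j .
    moreover have "(cseg f' j, nseg f' + dseg g' j) \<in> conn ?E'"
      using j f by (intro conn_edge) (auto simp: diag_Comp)
    moreover have "(nseg f' + dseg g' j, nseg f' + \<phi>2 (dseg g j)) \<in> conn ?E'"
      using right[OF \<phi>2(2)] j assms(3) by (simp add: conn_sym)
    ultimately show "(?\<phi> (cseg f j), ?\<phi> (nseg f + dseg g j)) \<in> conn ?E'"
      using cseg_less[OF f(1) j] by (auto intro: conn_trans)
  qed
  show ?thesis
  proof (rule diag_simI)
    show "component_map (nseg (Comp f g)) (edges (Comp f g)) (nseg (Comp f' g')) ?E' ?\<phi>"
      unfolding diag_Comp
    proof (rule component_map_Un)
      show "component_map (nseg f + nseg g) (edges f \<union> shift (nseg f) (edges g))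
          (nseg f' + nseg g') (edges f' \<union> shift (nseg f') (edges g')) ?\<phi>"
        using component_map_juxtapose[OF \<phi>1(1) \<phi>2(1)] edges_less[OF f(1)] by blast
    qed (rule glued[unfolded diag_Comp])
    fix j
    show "j < length (tdom (Comp f g)) \<Longrightarrow> (?\<phi> (dseg (Comp f g) j), dseg (Comp f' g') j) \<in> conn ?E'"
      using left[OF \<phi>1(2)] dseg_less[OF f(1)] by (auto simp: diag_Comp)
    show "j < length (tcod (Comp f g)) \<Longrightarrow> (?\<phi> (cseg (Comp f g) j), cseg (Comp f' g') j) \<in> conn ?E'"
      using right[OF \<phi>2(3)] by (auto simp: diag_Comp)
  qed (use f g assms(3) in auto)
qed

lemma diag_sim_retract:
  assumes "welltyped t" "welltyped t'" "tdom t = tdom t'" "tcod t = tcod t'"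
    and \<phi>: "\<And>x. x < nseg t \<Longrightarrow> \<phi> x < nseg t'"
    and \<psi>: "\<And>y. y < nseg t' \<Longrightarrow> \<psi> y < nseg t \<and> \<phi> (\<psi> y) = y"
    and edges: "\<And>a b. (a, b) \<in> edges t \<Longrightarrow> (\<phi> a, \<phi> b) \<in> conn (edges t')"
    and edges': "\<And>a b. (a, b) \<in> edges t' \<Longrightarrow> (\<psi> a, \<psi> b) \<in> conn (edges t)"
    and retract: "\<And>x. x < nseg t \<Longrightarrow> (x, \<psi> (\<phi> x)) \<in> conn (edges t)"
    and dseg: "\<And>j. j < length (tdom t) \<Longrightarrow> \<phi> (dseg t j) = dseg t' j"
    and cseg: "\<And>j. j < length (tcod t) \<Longrightarrow> \<phi> (cseg t j) = cseg t' j"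
  shows "diag_sim t t' \<and> diag_sim t' t"
proof
  show "diag_sim t t'"
  proof (rule diag_simI[where \<phi> = \<phi>])
    show "component_map (nseg t) (edges t) (nseg t') (edges t') \<phi>"
    proof (rule component_mapI)
      fix y assume "y < nseg t'"
      then show "\<exists>x < nseg t. (y, \<phi> x) \<in> conn (edges t')"
        using \<psi> by (metis conn_refl)
    qed (use \<phi> edges in auto)
  qed (use assms(1-4) dseg cseg in simp_all)
  show "diag_sim t' t"
  proof (rule diag_simI[where \<phi> = \<psi>])
    show "component_map (nseg t') (edges t') (nseg t) (edges t) \<psi>"
    proof (rule component_mapI)
      fix x assume "x < nseg t"
      then show "\<exists>y < nseg t'. (x, \<psi> y) \<in> conn (edges t)"
        using \<phi> retract by blast
    qed (use \<psi> edges' in auto)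
    fix j
    show "j < length (tdom t') \<Longrightarrow> (\<psi> (dseg t' j), dseg t j) \<in> conn (edges t)"
      using retract[OF dseg_less[OF assms(1)]] dseg assms(3) by (metis conn_sym)
    show "j < length (tcod t') \<Longrightarrow> (\<psi> (cseg t' j), cseg t j) \<in> conn (edges t)"
      using retract[OF cseg_less[OF assms(1)]] cseg assms(4) by (metis conn_sym)
  qed (use assms(1-4) in simp_all)
qed

lemma diag_sim_same_diag:
  assumes "welltyped t" "welltyped t'" "tdom t = tdom t'" "tcod t = tcod t'"
    and "nseg t = nseg t'" "edges t = edges t'"
    and "\<And>j. j < length (tdom t) \<Longrightarrow> dseg t j = dseg t' j"
    and "\<And>j. j < length (tcod t) \<Longrightarrow> cseg t j = cseg t' j"
  shows "diag_sim t t'" and "diag_sim t' t"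
proof -
  have "diag_sim t t' \<and> diag_sim t' t"
    by (rule diag_sim_retract[where \<phi> = id and \<psi> = id]) (use assms in \<open>auto intro: conn_edge\<close>)
  then show "diag_sim t t'" and "diag_sim t' t"
    by simp_all
qed

lemma diag_sim_Br_Nil:
  shows "diag_sim (Br Y []) (Id Y)" and "diag_sim (Id Y) (Br Y [])"
    and "diag_sim (BrInv Y []) (Id Y)" and "diag_sim (Id Y) (BrInv Y [])"
  by (rule diag_sim_same_diag; simp add: diag_simps)+

lemma diag_sim_Id_Comp:
  assumes "welltyped f"
  shows "diag_sim (Comp (Id (tdom f)) f) f" and "diag_sim f (Comp (Id (tdom f)) f)"
proof -
  let ?a = "length (tdom f)" and ?L = "Comp (Id (tdom f)) f"
  have edges_L: "edges ?L = shift ?a (edges f) \<union> {(j, ?a + dseg f j) | j. j < ?a}"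
    by (simp add: diag_simps)
  have "diag_sim ?L f \<and> diag_sim f ?L"
  proof (rule diag_sim_retract[where \<phi> = "\<lambda>x. if x < ?a then dseg f x else x - ?a"
        and \<psi> = "\<lambda>y. ?a + y"])
    fix x assume "x < nseg ?L"
    then show "(if x < ?a then dseg f x else x - ?a) < nseg f"
      and "(x, ?a + (if x < ?a then dseg f x else x - ?a)) \<in> conn (edges ?L)"
      using dseg_less[OF assms] by (auto simp: diag_simps edges_L intro: conn_edge)
  next
    fix a b assume "(a, b) \<in> edges ?L"
    then show "((if a < ?a then dseg f a else a - ?a), (if b < ?a then dseg f b else b - ?a))
        \<in> conn (edges f)"
      unfolding edges_L by (auto simp: shift_def intro: conn_edge)
  next
    fix a b assume "(a, b) \<in> edges f"
    then show "(?a + a, ?a + b) \<in> conn (edges ?L)"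
      unfolding edges_L by (auto simp: shift_def intro: conn_edge)
  qed (use assms in \<open>simp_all add: diag_simps\<close>)
  then show "diag_sim ?L f" and "diag_sim f ?L"
    by simp_all
qed

lemma diag_sim_Comp_Id:
  assumes "welltyped f"
  shows "diag_sim (Comp f (Id (tcod f))) f" and "diag_sim f (Comp f (Id (tcod f)))"
proof -
  let ?n = "nseg f" and ?R = "Comp f (Id (tcod f))"
  have edges_R: "edges ?R = edges f \<union> {(cseg f j, ?n + j) | j. j < length (tcod f)}"
    by (simp add: diag_simps)
  have "diag_sim ?R f \<and> diag_sim f ?R"
  proof (rule diag_sim_retract[where \<phi> = "\<lambda>x. if x < ?n then x else cseg f (x - ?n)" and \<psi> = id])
    fix x assume x: "x < nseg ?R"
    show "(if x < ?n then x else cseg f (x - ?n)) < ?n"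
      using x cseg_less[OF assms] by (auto simp: diag_simps)
    show "(x, id (if x < ?n then x else cseg f (x - ?n))) \<in> conn (edges ?R)"
    proof (cases "x < ?n")
      case False
      with x have "(cseg f (x - ?n), x) \<in> edges ?R"
        unfolding edges_R by (auto simp: diag_simps intro!: exI[of _ "x - ?n"])
      with False show ?thesis
        by (simp add: conn_edge_converse)
    qed simp
  next
    fix a b assume "(a, b) \<in> edges ?R"
    then show "((if a < ?n then a else cseg f (a - ?n)), (if b < ?n then b else cseg f (b - ?n)))
        \<in> conn (edges f)"
      unfolding edges_R using edges_less[OF assms] cseg_less[OF assms] by (auto intro: conn_edge)
  qed (use assms dseg_less[OF assms] in \<open>auto simp: diag_simps edges_R intro: conn_edge\<close>)
  then show "diag_sim ?R f" and "diag_sim f ?R"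
    by simp_all
qed

lemma diag_sim_braid:
  assumes C: "welltyped C" "tdom C = []"
  shows "diag_sim (Comp (Tens (Id Y) C) (Br Y (tcod C))) (Tens C (Id Y))" (is "diag_sim ?L ?R")
    and "diag_sim (Tens C (Id Y)) (Comp (Tens (Id Y) C) (Br Y (tcod C)))"
proof -
  define y c x where "y = length Y" and "c = nseg C" and "x = length (tcod C)"
  \<comment> \<open>The segments of \<open>?L\<close> are the strands \<open>Y\<close>, those of \<open>C\<close>, and the output strands of the
    braiding, the \<open>j\<close>-th glued to segment \<open>top j\<close>; \<open>?R\<close> has those of \<open>C\<close>, then the strands \<open>Y\<close>.\<close>
  define top where "top j = (if j < y then j else y + cseg C (j - y))" for j
  define wire where "wire j = (if j < y then c + j else cseg C (j - y))" for j
  define \<phi> where "\<phi> s = (if s < y then c + s else if s < y + c then s - y else wire (s - (y + c)))"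
    for s
  define \<psi> where "\<psi> s = (if s < c then y + s else s - c)" for s
  have cseg_C: "j < x \<Longrightarrow> cseg C j < c" for j
    using cseg_less[OF C(1)] by (simp add: c_def x_def)
  have nseg_L: "nseg ?L = y + c + (y + x)" and nseg_R: "nseg ?R = c + y"
    by (simp_all add: diag_simps y_def c_def x_def)
  have edges_L: "edges ?L = shift y (edges C) \<union> {(top j, y + c + j) | j. j < y + x}"
    by (simp add: diag_simps top_def y_def c_def x_def)
  have \<psi>_wire: "j < y + x \<Longrightarrow> \<psi> (wire j) = top j" for j
    using cseg_C[of "j - y"] by (auto simp: \<psi>_def wire_def top_def)
  have "diag_sim ?L ?R \<and> diag_sim ?R ?L"
  proof (rule diag_sim_retract[where \<phi> = \<phi> and \<psi> = \<psi>])
    fix s assume s: "s < nseg ?L"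
    show "\<phi> s < nseg ?R"
    proof (cases "s < y + c + y")
      case False
      with s have "s - (y + c) - y < x"
        by (simp add: nseg_L)
      with False show ?thesis
        using cseg_C[of "s - (y + c) - y"] by (simp add: nseg_R \<phi>_def wire_def)
    qed (auto simp: nseg_R \<phi>_def wire_def)
    show "(s, \<psi> (\<phi> s)) \<in> conn (edges ?L)"
    proof (cases "s < y + c")
      case False
      then have "s - (y + c) < y + x" "(top (s - (y + c)), s) \<in> edges ?L"
        using s by (auto simp: nseg_L edges_L intro!: exI[of _ "s - (y + c)"])
      with False show ?thesis
        by (simp add: \<phi>_def \<psi>_wire conn_edge_converse)
    qed (auto simp: \<phi>_def \<psi>_def)
  next
    fix s assume "s < nseg ?R"
    then show "\<psi> s < nseg ?L \<and> \<phi> (\<psi> s) = s"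
      by (auto simp: nseg_L nseg_R \<phi>_def \<psi>_def wire_def)
  next
    fix a b assume "(a, b) \<in> edges ?L"
    then consider (inner) a' b' where "(a', b') \<in> edges C" "a = y + a'" "b = y + b'"
      | (glued) j where "j < y + x" "a = top j" "b = y + c + j"
      unfolding edges_L shift_def by blast
    then show "(\<phi> a, \<phi> b) \<in> conn (edges ?R)"
    proof cases
      case inner
      then show ?thesis
        using edges_less[OF C(1) inner(1)] by (simp add: diag_simps \<phi>_def c_def conn_edge)
    next
      case glued
      then show ?thesis
        using cseg_C[of "j - y"] by (auto simp: \<phi>_def top_def wire_def)
    qed
  next
    fix a b assume "(a, b) \<in> edges ?R"
    then have "(a, b) \<in> edges C" "a < c" "b < c"
      using edges_less[OF C(1)] by (simp_all add: diag_simps c_def)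
    then show "(\<psi> a, \<psi> b) \<in> conn (edges ?L)"
      unfolding edges_L by (auto simp: \<psi>_def shift_def intro!: conn_edge)
  qed (use C in \<open>auto simp: diag_simps \<phi>_def wire_def y_def c_def x_def\<close>)
  then show "diag_sim ?L ?R" and "diag_sim ?R ?L"
    by simp_all
qed

definition swap_blocks :: "nat \<Rightarrow> nat \<Rightarrow> nat \<Rightarrow> nat \<Rightarrow> nat" where
  "swap_blocks a b c x =
    (if x < a then x else if x < a + b then x + c else if x < a + b + c then x - b else x)"

lemma swap_blocks_inverse: "swap_blocks a c b (swap_blocks a b c x) = x"
  by (auto simp: swap_blocks_def)

lemma edges_interchange:
  assumes wt: "welltyped f" "welltyped g" "welltyped h" "welltyped k"
    and cod: "tcod f = tdom g" "tcod h = tdom k"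
  shows "edges (Comp (Tens f h) (Tens g k))
    = map_prod (swap_blocks (nseg f) (nseg g) (nseg h)) (swap_blocks (nseg f) (nseg g) (nseg h))
        ` edges (Tens (Comp f g) (Comp h k))"
proof -
  let ?nf = "nseg f" and ?ng = "nseg g" and ?nh = "nseg h" and ?\<phi> = "swap_blocks (nseg f) (nseg g) (nseg h)"
  have \<phi>_f: "x < ?nf \<Longrightarrow> ?\<phi> x = x"
    and \<phi>_g: "x < ?ng \<Longrightarrow> ?\<phi> (?nf + x) = ?nf + ?nh + x"
    and \<phi>_h: "x < ?nh \<Longrightarrow> ?\<phi> (?nf + ?ng + x) = ?nf + x"
    and \<phi>_k: "?\<phi> (?nf + ?ng + ?nh + x) = ?nf + ?nh + ?ng + x" for x
    by (simp_all add: swap_blocks_def)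
  note bounds = edges_less[OF wt(1)] edges_less[OF wt(2)] edges_less[OF wt(3)] edges_less[OF wt(4)]
    cseg_less[OF wt(1)] cseg_less[OF wt(3)] dseg_less[OF wt(2)] dseg_less[OF wt(4)]
  show ?thesis
    unfolding edges_Tens_Comp_Comp edges_Comp_Tens_Tens[OF cod] image_Un
  proof (intro arg_cong2[where f = "(\<union>)"])
    have "\<forall>(a, b) \<in> edges f. a < ?nf \<and> b < ?nf"
      using bounds by auto
    then show "edges f = map_prod ?\<phi> ?\<phi> ` edges f"
      using image_shift[of "edges f" ?nf ?\<phi> 0 0] \<phi>_f by simp
    show "shift (?nf + ?nh) (edges g) = map_prod ?\<phi> ?\<phi> ` shift ?nf (edges g)"
      using bounds \<phi>_g by (intro image_shift[where n = ?ng, symmetric]) auto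
    show "shift ?nf (edges h) = map_prod ?\<phi> ?\<phi> ` shift (?nf + ?ng) (edges h)"
      using bounds \<phi>_h by (intro image_shift[where n = ?nh, symmetric]) auto
    show "shift (?nf + ?nh + ?ng) (edges k) = map_prod ?\<phi> ?\<phi> ` shift (?nf + ?ng + ?nh) (edges k)"
      using bounds \<phi>_k by (intro image_shift[where n = "nseg k", symmetric]) auto
    show "{(cseg f j, ?nf + ?nh + dseg g j) | j. j < length (tcod f)}
        = map_prod ?\<phi> ?\<phi> ` {(cseg f j, ?nf + dseg g j) | j. j < length (tcod f)}"
      using bounds cod \<phi>_f \<phi>_g by (intro image_pairs[symmetric]) auto
    show "{(?nf + cseg h j, ?nf + ?nh + ?ng + dseg k j) | j. j < length (tcod h)}
        = map_prod ?\<phi> ?\<phi> ` {(?nf + ?ng + cseg h j, ?nf + ?ng + ?nh + dseg k j) | j. j < length (tcod h)}"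
      using bounds cod \<phi>_h \<phi>_k by (intro image_pairs[symmetric]) auto
  qed
qed

lemma diag_sim_interchange:
  assumes wt: "welltyped f" "welltyped g" "welltyped h" "welltyped k"
    and cod: "tcod f = tdom g" "tcod h = tdom k"
  shows "diag_sim (Tens (Comp f g) (Comp h k)) (Comp (Tens f h) (Tens g k))" (is "diag_sim ?L ?R")
    and "diag_sim (Comp (Tens f h) (Tens g k)) (Tens (Comp f g) (Comp h k))"
proof -
  let ?\<phi> = "swap_blocks (nseg f) (nseg g) (nseg h)" and ?\<psi> = "swap_blocks (nseg f) (nseg h) (nseg g)"
  note edges = edges_interchange[OF assms]
  have "diag_sim ?L ?R \<and> diag_sim ?R ?L"
  proof (rule diag_sim_retract[where \<phi> = ?\<phi> and \<psi> = ?\<psi>])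
    fix x assume "x < nseg ?L"
    then show "?\<phi> x < nseg ?R"
      by (auto simp: diag_simps swap_blocks_def)
  next
    fix y assume "y < nseg ?R"
    then show "?\<psi> y < nseg ?L \<and> ?\<phi> (?\<psi> y) = y"
      by (auto simp: diag_simps swap_blocks_def)
  next
    fix a b assume "(a, b) \<in> edges ?L"
    then show "(?\<phi> a, ?\<phi> b) \<in> conn (edges ?R)"
      unfolding edges by (auto intro: conn_edge)
  next
    fix a b assume "(a, b) \<in> edges ?R"
    then show "(?\<psi> a, ?\<psi> b) \<in> conn (edges ?L)"
      unfolding edges by (auto simp: swap_blocks_inverse intro: conn_edge)
  next
    fix j assume "j < length (tdom ?L)"
    then show "?\<phi> (dseg ?L j) = dseg ?R j"
      using dseg_less[OF wt(1)] dseg_less[OF wt(3)] by (auto simp: diag_simps swap_blocks_def)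
  next
    fix j assume "j < length (tcod ?L)"
    then show "?\<phi> (cseg ?L j) = cseg ?R j"
      using cseg_less[OF wt(2), of j] cseg_less[OF wt(4), of "j - length (tcod g)"]
      by (auto simp: diag_simps swap_blocks_def)
  qed (use wt cod in \<open>simp_all add: swap_blocks_inverse\<close>)
  then show "diag_sim ?L ?R" and "diag_sim ?R ?L"
    by simp_all
qed

section \<open>Equality by the axioms, preserving connectivity\<close>

definition eqv_sim :: "trm \<Rightarrow> trm \<Rightarrow> bool" where
  "eqv_sim f g \<longleftrightarrow> eqv f g \<and> diag_sim f g \<and> diag_sim g f"

lemma eqv_sim_welltyped:
  "eqv_sim f g \<Longrightarrow> welltyped f \<and> welltyped g \<and> tdom f = tdom g \<and> tcod f = tcod g"
  unfolding eqv_sim_def using diag_sim_welltyped by blast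

lemma eqv_sim_refl: "welltyped f \<Longrightarrow> eqv_sim f f"
  using eqv.refl[of f "tdom f" "tcod f"] diag_sim_refl[of f]
  by (simp add: eqv_sim_def typed_iff_welltyped)

lemma eqv_sim_sym: "eqv_sim f g \<Longrightarrow> eqv_sim g f"
  by (simp add: eqv_sim_def eqv.sym)

lemma eqv_sim_trans [trans]: "eqv_sim f g \<Longrightarrow> eqv_sim g h \<Longrightarrow> eqv_sim f h"
  unfolding eqv_sim_def using eqv.trans[of f g h] diag_sim_trans[of f g h] diag_sim_trans[of h g f]
  by blast

lemma eqv_sim_Comp:
  assumes "eqv_sim f f'" and "eqv_sim g g'" and "tcod f = tdom g"
  shows "eqv_sim (Comp f g) (Comp f' g')"
proof -
  have "typed f (tdom f) (tcod f)" "typed g (tcod f) (tcod g)"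
    "typed f' (tdom f) (tcod f)" "typed g' (tcod f) (tcod g)"
    using eqv_sim_welltyped[OF assms(1)] eqv_sim_welltyped[OF assms(2)] assms(3)
    by (simp_all add: typed_iff_welltyped)
  then have "eqv (Comp f g) (Comp f' g')"
    using assms(1,2) by (intro eqv.comp_cong) (simp_all add: eqv_sim_def)
  moreover have "diag_sim (Comp f g) (Comp f' g')" "diag_sim (Comp f' g') (Comp f g)"
    using assms eqv_sim_welltyped[OF assms(1)] eqv_sim_welltyped[OF assms(2)]
    by (simp_all add: eqv_sim_def diag_sim_Comp)
  ultimately show ?thesis
    by (simp add: eqv_sim_def)
qed

lemma eqv_sim_Tens:
  assumes "eqv_sim f f'" and "eqv_sim g g'"
  shows "eqv_sim (Tens f g) (Tens f' g')"
proof -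
  have "typed f (tdom f) (tcod f)" "typed g (tdom g) (tcod g)"
    "typed f' (tdom f) (tcod f)" "typed g' (tdom g) (tcod g)"
    using eqv_sim_welltyped[OF assms(1)] eqv_sim_welltyped[OF assms(2)]
    by (simp_all add: typed_iff_welltyped)
  then have "eqv (Tens f g) (Tens f' g')"
    using assms by (intro eqv.tens_cong) (simp_all add: eqv_sim_def)
  moreover have "diag_sim (Tens f g) (Tens f' g')" "diag_sim (Tens f' g') (Tens f g)"
    using assms by (simp_all add: eqv_sim_def diag_sim_Tens)
  ultimately show ?thesis
    by (simp add: eqv_sim_def)
qed

lemma eqv_sim_id_left: "welltyped f \<Longrightarrow> tdom f = A \<Longrightarrow> eqv_sim (Comp (Id A) f) f"
  using eqv.id_left[of f A "tcod f"] diag_sim_Id_Comp[of f]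
  by (auto simp: eqv_sim_def typed_iff_welltyped)

lemma eqv_sim_id_right: "welltyped f \<Longrightarrow> tcod f = B \<Longrightarrow> eqv_sim (Comp f (Id B)) f"
  using eqv.id_right[of f "tdom f" B] diag_sim_Comp_Id[of f]
  by (auto simp: eqv_sim_def typed_iff_welltyped)

lemma eqv_sim_comp_assoc:
  assumes "welltyped f" "welltyped g" "welltyped h" "tcod f = tdom g" "tcod g = tdom h"
  shows "eqv_sim (Comp (Comp f g) h) (Comp f (Comp g h))"
  using eqv.comp_assoc[of f "tdom f" "tcod f" g "tcod g" h "tcod h"]
    diag_sim_same_diag[of "Comp (Comp f g) h" "Comp f (Comp g h)"] assms
  by (simp add: eqv_sim_def typed_iff_welltyped diag_simps add.assoc shift_Un shift_shift
      shift_pairs Un_ac)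

lemma eqv_sim_tens_unit_left: "welltyped f \<Longrightarrow> eqv_sim (Tens (Id []) f) f"
  using eqv.tens_unit_left[of f "tdom f" "tcod f"] diag_sim_same_diag[of "Tens (Id []) f" f]
  by (simp add: eqv_sim_def typed_iff_welltyped diag_simps)

lemma eqv_sim_tens_unit_right: "welltyped f \<Longrightarrow> eqv_sim (Tens f (Id [])) f"
  using eqv.tens_unit_right[of f "tdom f" "tcod f"] diag_sim_same_diag[of "Tens f (Id [])" f]
  by (simp add: eqv_sim_def typed_iff_welltyped diag_simps)

lemma eqv_sim_tens_id: "eqv_sim (Tens (Id A) (Id B)) (Id (A @ B))"
  using eqv.tens_id[of A B] diag_sim_same_diag[of "Tens (Id A) (Id B)" "Id (A @ B)"]
  by (simp add: eqv_sim_def diag_simps)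

lemma eqv_sim_tens_assoc:
  assumes "welltyped f" "welltyped g" "welltyped h"
  shows "eqv_sim (Tens (Tens f g) h) (Tens f (Tens g h))"
proof -
  have "diag_sim (Tens (Tens f g) h) (Tens f (Tens g h))" "diag_sim (Tens f (Tens g h)) (Tens (Tens f g) h)"
    by (rule diag_sim_same_diag;
        use assms in \<open>auto simp: diag_simps add.assoc shift_Un shift_shift Un_ac\<close>)+
  then show ?thesis
    using eqv.tens_assoc[of f "tdom f" "tcod f" g "tdom g" "tcod g" h "tdom h" "tcod h"] assms
    by (simp add: eqv_sim_def typed_iff_welltyped)
qed

lemma eqv_sim_interchange:
  assumes "welltyped f" "welltyped g" "welltyped h" "welltyped k" "tcod f = tdom g" "tcod h = tdom k"
  shows "eqv_sim (Tens (Comp f g) (Comp h k)) (Comp (Tens f h) (Tens g k))"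
  using eqv.interchange[of f "tdom f" "tcod f" g "tcod g" h "tdom h" "tcod h" k "tcod k"]
    diag_sim_interchange[OF assms] assms
  by (simp add: eqv_sim_def typed_iff_welltyped)

lemma eqv_sim_br_inv_Nil: "eqv_sim (Comp (BrInv Y []) (Br Y [])) (Id Y)"
proof -
  have "diag_sim (Comp (BrInv Y []) (Br Y [])) (Comp (Id Y) (Id Y))"
    and "diag_sim (Comp (Id Y) (Id Y)) (Comp (BrInv Y []) (Br Y []))"
    by (rule diag_sim_Comp; simp add: diag_sim_Br_Nil)+
  moreover have "diag_sim (Comp (Id Y) (Id Y)) (Id Y)" and "diag_sim (Id Y) (Comp (Id Y) (Id Y))"
    using diag_sim_Id_Comp[of "Id Y"] by simp_all
  ultimately show ?thesis
    using eqv.br_inv2[of Y "[]"] by (auto simp: eqv_sim_def intro: diag_sim_trans)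
qed

lemma eqv_sim_br_nat_Nil:
  assumes "welltyped C" "tdom C = []"
  shows "eqv_sim (Comp (Tens (Id Y) C) (Br Y (tcod C))) (Comp (Br Y []) (Tens C (Id Y)))"
proof -
  have "diag_sim (Comp (Br Y []) (Tens C (Id Y))) (Comp (Id Y) (Tens C (Id Y)))"
    and "diag_sim (Comp (Id Y) (Tens C (Id Y))) (Comp (Br Y []) (Tens C (Id Y)))"
    by (rule diag_sim_Comp; use assms in \<open>simp add: diag_sim_Br_Nil diag_sim_refl\<close>)+
  moreover have "diag_sim (Comp (Id Y) (Tens C (Id Y))) (Tens C (Id Y))"
    and "diag_sim (Tens C (Id Y)) (Comp (Id Y) (Tens C (Id Y)))"
    using diag_sim_Id_Comp[of "Tens C (Id Y)"] assms by simp_all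
  moreover have "eqv (Comp (Tens (Id Y) C) (Br Y (tcod C))) (Comp (Br Y []) (Tens C (Id Y)))"
    using eqv.br_nat[of "Id Y" Y Y C "[]" "tcod C"] assms by (simp add: typed_iff_welltyped)
  ultimately show ?thesis
    using diag_sim_braid[OF assms, of Y] by (auto simp: eqv_sim_def intro: diag_sim_trans)
qed

lemma eqv_sim_Tens_as_Comp:
  assumes "welltyped f" "welltyped g"
  shows "eqv_sim (Tens f g) (Comp (Tens f (Id (tdom g))) (Tens (Id (tcod f)) g))"
proof -
  have "eqv_sim (Tens f g) (Tens (Comp f (Id (tcod f))) (Comp (Id (tdom g)) g))"
    by (rule eqv_sim_sym[OF eqv_sim_Tens[OF eqv_sim_id_right eqv_sim_id_left]]) (use assms in auto)
  also have "eqv_sim \<dots> (Comp (Tens f (Id (tdom g))) (Tens (Id (tcod f)) g))"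
    by (rule eqv_sim_interchange) (use assms in auto)
  finally show ?thesis .
qed

lemma eqv_sim_Tens_as_Comp':
  assumes "welltyped f" "welltyped g"
  shows "eqv_sim (Tens f g) (Comp (Tens (Id (tdom f)) g) (Tens f (Id (tcod g))))"
proof -
  have "eqv_sim (Tens f g) (Tens (Comp (Id (tdom f)) f) (Comp g (Id (tcod g))))"
    by (rule eqv_sim_sym[OF eqv_sim_Tens[OF eqv_sim_id_left eqv_sim_id_right]]) (use assms in auto)
  also have "eqv_sim \<dots> (Comp (Tens (Id (tdom f)) g) (Tens f (Id (tcod g))))"
    by (rule eqv_sim_interchange) (use assms in auto)
  finally show ?thesis .
qed

lemma eqv_sim_Comp_Tens_Id:
  assumes "welltyped f" "welltyped C" "tdom C = []"
  shows "eqv_sim (Comp f (Tens (Id (tcod f)) C)) (Tens f C)"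
proof -
  have "eqv_sim (Comp f (Tens (Id (tcod f)) C)) (Comp (Tens f (Id [])) (Tens (Id (tcod f)) C))"
    by (rule eqv_sim_Comp[OF eqv_sim_sym[OF eqv_sim_tens_unit_right] eqv_sim_refl]) (use assms in auto)
  also have "eqv_sim \<dots> (Tens f C)"
    using eqv_sim_sym[OF eqv_sim_Tens_as_Comp[OF assms(1,2)]] assms(3) by simp
  finally show ?thesis .
qed

lemma eqv_sim_slide:
  assumes "welltyped f" "welltyped C" "tdom C = []"
  shows "eqv_sim (Comp f (Tens (Id (tcod f)) C)) (Comp (Tens (Id (tdom f)) C) (Tens f (Id (tcod C))))"
  using eqv_sim_trans[OF eqv_sim_Comp_Tens_Id[OF assms] eqv_sim_Tens_as_Comp'[OF assms(1,2)]] .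

text \<open>Naturality of the braiding moves a morphism \<open>C : [] \<rightarrow> X\<close> across the strands \<open>Y\<close> only
  at the price of the leading braiding \<open>Br Y []\<close>; \<open>sigma\<close> cancels it with \<open>BrInv Y []\<close>.\<close>

definition sigma :: "obj \<Rightarrow> obj \<Rightarrow> trm" where
  "sigma Y X = Comp (Tens (BrInv Y []) (Id X)) (Br Y X)"

lemma sigma_simps [simp]:
  "welltyped (sigma Y X)" "tdom (sigma Y X) = Y @ X" "tcod (sigma Y X) = X @ Y"
  "gens (sigma Y X) = {}"
  by (simp_all add: sigma_def)

lemma eqv_sim_swap:
  assumes "welltyped C" "tdom C = []"
  shows "eqv_sim (Tens C (Id Y)) (Comp (Tens (Id Y) C) (sigma Y (tcod C)))"
proof -
  let ?X = "tcod C"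
  have "eqv_sim (Tens C (Id Y)) (Comp (Id Y) (Tens C (Id Y)))"
    by (rule eqv_sim_sym[OF eqv_sim_id_left]) (use assms in auto)
  also have "eqv_sim \<dots> (Comp (Comp (BrInv Y []) (Br Y [])) (Tens C (Id Y)))"
    by (rule eqv_sim_Comp[OF eqv_sim_sym[OF eqv_sim_br_inv_Nil] eqv_sim_refl]) (use assms in auto)
  also have "eqv_sim \<dots> (Comp (BrInv Y []) (Comp (Br Y []) (Tens C (Id Y))))"
    by (rule eqv_sim_comp_assoc) (use assms in auto)
  also have "eqv_sim \<dots> (Comp (BrInv Y []) (Comp (Tens (Id Y) C) (Br Y ?X)))"
    by (rule eqv_sim_Comp[OF eqv_sim_refl eqv_sim_sym[OF eqv_sim_br_nat_Nil]]) (use assms in auto)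
  also have "eqv_sim \<dots> (Comp (Comp (BrInv Y []) (Tens (Id Y) C)) (Br Y ?X))"
    by (rule eqv_sim_sym[OF eqv_sim_comp_assoc]) (use assms in auto)
  also have "eqv_sim \<dots> (Comp (Comp (Tens (Id Y) C) (Tens (BrInv Y []) (Id ?X))) (Br Y ?X))"
    using eqv_sim_slide[of "BrInv Y []" C] assms
    by (intro eqv_sim_Comp[OF _ eqv_sim_refl]) auto
  also have "eqv_sim \<dots> (Comp (Tens (Id Y) C) (sigma Y ?X))"
    unfolding sigma_def by (rule eqv_sim_comp_assoc) (use assms in auto)
  finally show ?thesis .
qed

section \<open>Bridge decomposition\<close>

definition bridge_split :: "trm \<Rightarrow> trm \<Rightarrow> trm \<Rightarrow> bool" where
  "bridge_split t C R \<longleftrightarrow> welltyped C \<and> tdom C = [] \<and> gens C \<inter> {CupR, CupL} = {}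
    \<and> welltyped R \<and> tdom R = tdom t @ tcod C \<and> tcod R = tcod t \<and> gens R \<inter> {CapR, CapL} = {}
    \<and> eqv_sim t (Comp (Tens (Id (tdom t)) C) R)"

lemma bridge_split_eqv_sim: "eqv_sim t t' \<Longrightarrow> bridge_split t' C R \<Longrightarrow> bridge_split t C R"
  using eqv_sim_welltyped[of t t'] by (auto simp: bridge_split_def intro: eqv_sim_trans)

lemma bridge_split_capless:
  assumes "welltyped t" "gens t \<inter> {CapR, CapL} = {}"
  shows "bridge_split t (Id []) t"
proof -
  have "eqv_sim t (Comp (Id (tdom t)) t)"
    by (rule eqv_sim_sym[OF eqv_sim_id_left]) (use assms in auto)
  also have "eqv_sim \<dots> (Comp (Tens (Id (tdom t)) (Id [])) t)"
    by (rule eqv_sim_Comp[OF eqv_sim_sym[OF eqv_sim_tens_unit_right] eqv_sim_refl]) (use assms in auto)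
  finally show ?thesis
    using assms by (simp add: bridge_split_def)
qed

lemma bridge_split_cap:
  assumes "g \<in> {CapR, CapL}"
  shows "bridge_split (Gen g) (Gen g) (Id (gcod g))"
proof -
  have "eqv_sim (Gen g) (Comp (Gen g) (Id (gcod g)))"
    by (rule eqv_sim_sym[OF eqv_sim_id_right]) auto
  also have "eqv_sim \<dots> (Comp (Tens (Id []) (Gen g)) (Id (gcod g)))"
    by (rule eqv_sim_Comp[OF eqv_sim_sym[OF eqv_sim_tens_unit_left] eqv_sim_refl]) auto
  finally show ?thesis
    using assms by (auto simp: bridge_split_def)
qed

lemma bridge_split_Comp:
  assumes f: "bridge_split f C1 R1" and g: "bridge_split g C2 R2" and fg: "tcod f = tdom g"
  shows "bridge_split (Comp f g) (Tens C1 C2) (Comp (Tens R1 (Id (tcod C2))) R2)"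
proof -
  let ?A = "tdom f" and ?X1 = "tcod C1" and ?X2 = "tcod C2"
  let ?R = "Comp (Tens R1 (Id ?X2)) R2"
  have wt: "welltyped C1" "tdom C1 = []" "welltyped R1" "tdom R1 = ?A @ ?X1" "tcod R1 = tdom g"
    "welltyped C2" "tdom C2 = []" "welltyped R2" "tdom R2 = tdom g @ ?X2"
    using f g fg by (simp_all add: bridge_split_def)
  have "eqv_sim (Comp f g) (Comp (Comp (Tens (Id ?A) C1) R1) (Comp (Tens (Id (tdom g)) C2) R2))"
    using f g fg by (intro eqv_sim_Comp) (simp_all add: bridge_split_def)
  also have "eqv_sim \<dots> (Comp (Tens (Id ?A) C1) (Comp R1 (Comp (Tens (Id (tdom g)) C2) R2)))"
    by (rule eqv_sim_comp_assoc) (use wt in auto)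
  also have "eqv_sim \<dots> (Comp (Tens (Id ?A) C1) (Comp (Tens (Id (?A @ ?X1)) C2) ?R))"
  proof (rule eqv_sim_Comp[OF eqv_sim_refl])
    have "eqv_sim (Comp R1 (Comp (Tens (Id (tdom g)) C2) R2))
        (Comp (Comp R1 (Tens (Id (tdom g)) C2)) R2)"
      by (rule eqv_sim_sym[OF eqv_sim_comp_assoc]) (use wt in auto)
    also have "eqv_sim \<dots> (Comp (Comp (Tens (Id (?A @ ?X1)) C2) (Tens R1 (Id ?X2))) R2)"
      using eqv_sim_slide[of R1 C2] wt by (intro eqv_sim_Comp[OF _ eqv_sim_refl]) auto
    also have "eqv_sim \<dots> (Comp (Tens (Id (?A @ ?X1)) C2) ?R)"
      by (rule eqv_sim_comp_assoc) (use wt in auto)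
    finally show "eqv_sim (Comp R1 (Comp (Tens (Id (tdom g)) C2) R2))
        (Comp (Tens (Id (?A @ ?X1)) C2) ?R)" .
  qed (use wt in auto)
  also have "eqv_sim \<dots> (Comp (Comp (Tens (Id ?A) C1) (Tens (Id (?A @ ?X1)) C2)) ?R)"
    by (rule eqv_sim_sym[OF eqv_sim_comp_assoc]) (use wt in auto)
  also have "eqv_sim \<dots> (Comp (Tens (Tens (Id ?A) C1) C2) ?R)"
    using eqv_sim_Comp_Tens_Id[of "Tens (Id ?A) C1" C2] wt
    by (intro eqv_sim_Comp[OF _ eqv_sim_refl]) auto
  also have "eqv_sim \<dots> (Comp (Tens (Id ?A) (Tens C1 C2)) ?R)"
    by (rule eqv_sim_Comp[OF eqv_sim_tens_assoc eqv_sim_refl]) (use wt in auto)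
  finally show ?thesis
    using f g fg by (auto simp: bridge_split_def)
qed

lemma bridge_split_Id_Tens:
  assumes "bridge_split g C R"
  shows "bridge_split (Tens (Id B) g) C (Tens (Id B) R)"
proof -
  let ?A = "tdom g"
  have wt: "welltyped C" "tdom C = []" "welltyped R" "tdom R = ?A @ tcod C"
    using assms by (simp_all add: bridge_split_def)
  have "eqv_sim (Tens (Id B) g) (Tens (Comp (Id B) (Id B)) (Comp (Tens (Id ?A) C) R))"
    using assms by (intro eqv_sim_Tens eqv_sim_sym[OF eqv_sim_id_left]) (auto simp: bridge_split_def)
  also have "eqv_sim \<dots> (Comp (Tens (Id B) (Tens (Id ?A) C)) (Tens (Id B) R))"
    by (rule eqv_sim_interchange) (use wt in auto)
  also have "eqv_sim \<dots> (Comp (Tens (Tens (Id B) (Id ?A)) C) (Tens (Id B) R))"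
    by (rule eqv_sim_Comp[OF eqv_sim_sym[OF eqv_sim_tens_assoc] eqv_sim_refl]) (use wt in auto)
  also have "eqv_sim \<dots> (Comp (Tens (Id (B @ ?A)) C) (Tens (Id B) R))"
    by (rule eqv_sim_Comp[OF eqv_sim_Tens[OF eqv_sim_tens_id eqv_sim_refl] eqv_sim_refl])
      (use wt in auto)
  finally show ?thesis
    using assms by (auto simp: bridge_split_def)
qed

lemma bridge_split_Tens_Id:
  assumes "bridge_split f C R"
  shows "bridge_split (Tens f (Id B)) C (Comp (Tens (Id (tdom f)) (sigma B (tcod C))) (Tens R (Id B)))"
proof -
  let ?A = "tdom f" and ?X = "tcod C"
  let ?M = "Tens (Id ?A) (sigma B ?X)"
  have wt: "welltyped C" "tdom C = []" "welltyped R" "tdom R = ?A @ ?X"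
    using assms by (simp_all add: bridge_split_def)
  have "eqv_sim (Tens f (Id B)) (Tens (Comp (Tens (Id ?A) C) R) (Comp (Id B) (Id B)))"
    using assms by (intro eqv_sim_Tens eqv_sim_sym[OF eqv_sim_id_left]) (auto simp: bridge_split_def)
  also have "eqv_sim \<dots> (Comp (Tens (Tens (Id ?A) C) (Id B)) (Tens R (Id B)))"
    by (rule eqv_sim_interchange) (use wt in auto)
  also have "eqv_sim \<dots> (Comp (Comp (Tens (Id (?A @ B)) C) ?M) (Tens R (Id B)))"
  proof (rule eqv_sim_Comp[OF _ eqv_sim_refl])
    have "eqv_sim (Tens (Tens (Id ?A) C) (Id B)) (Tens (Id ?A) (Tens C (Id B)))"
      by (rule eqv_sim_tens_assoc) (use wt in auto)
    also have "eqv_sim \<dots> (Tens (Comp (Id ?A) (Id ?A)) (Comp (Tens (Id B) C) (sigma B ?X)))"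
      by (rule eqv_sim_Tens[OF eqv_sim_sym[OF eqv_sim_id_left] eqv_sim_swap[OF wt(1,2)]]) auto
    also have "eqv_sim \<dots> (Comp (Tens (Id ?A) (Tens (Id B) C)) ?M)"
      by (rule eqv_sim_interchange) (use wt in auto)
    also have "eqv_sim \<dots> (Comp (Tens (Id (?A @ B)) C) ?M)"
      using eqv_sim_tens_assoc[of "Id ?A" "Id B" C] eqv_sim_tens_id[of ?A B] wt
      by (intro eqv_sim_Comp[OF _ eqv_sim_refl])
        (auto intro: eqv_sim_trans eqv_sim_sym eqv_sim_Tens eqv_sim_refl)
    finally show "eqv_sim (Tens (Tens (Id ?A) C) (Id B)) (Comp (Tens (Id (?A @ B)) C) ?M)" .
  qed (use wt in auto)
  also have "eqv_sim \<dots> (Comp (Tens (Id (?A @ B)) C) (Comp ?M (Tens R (Id B))))"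
    by (rule eqv_sim_comp_assoc) (use wt in auto)
  finally show ?thesis
    using assms by (auto simp: bridge_split_def)
qed

lemma bridge_split_Tens:
  assumes "bridge_split f C1 R1" and "bridge_split g C2 R2"
  shows "\<exists>C R. bridge_split (Tens f g) C R"
proof -
  have wt: "welltyped f" "welltyped g"
    using assms eqv_sim_welltyped by (auto simp: bridge_split_def)
  have "bridge_split (Comp (Tens f (Id (tdom g))) (Tens (Id (tcod f)) g)) (Tens C1 C2)
      (Comp (Tens (Comp (Tens (Id (tdom f)) (sigma (tdom g) (tcod C1))) (Tens R1 (Id (tdom g))))
        (Id (tcod C2))) (Tens (Id (tcod f)) R2))"
    using bridge_split_Comp[OF bridge_split_Tens_Id[OF assms(1)] bridge_split_Id_Tens[OF assms(2)]]
    by simp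
  then show ?thesis
    using bridge_split_eqv_sim[OF eqv_sim_Tens_as_Comp[OF wt]] by blast
qed

lemma bridge_split_exists: "welltyped t \<Longrightarrow> \<exists>C R. bridge_split t C R"
proof (induction t)
  case (Gen g)
  then show ?case
    using bridge_split_cap[of g] bridge_split_capless[of "Gen g"] by (cases g) auto
next
  case (Comp f g)
  then show ?case
    using bridge_split_Comp by (metis welltyped.simps(1))
next
  case (Tens f g)
  then show ?case
    using bridge_split_Tens by (metis welltyped.simps(2))
qed (auto intro!: exI bridge_split_capless)

theorem mainTheorem6:
  assumes "knot k"
  shows "\<exists>k'. eqv k k' \<and> knot k' \<and> bridge_position k'"
proof -
  have k: "welltyped k" "tdom k = []" "tcod k = []"
    using assms by (simp_all add: knot_iff typed_iff_welltyped)
  obtain C R where split: "bridge_split k C R"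
    using bridge_split_exists[OF k(1)] by blast
  let ?k' = "Comp (Tens (Id []) C) R"
  have "eqv_sim k ?k'"
    using split k by (simp add: bridge_split_def)
  then have "eqv k ?k'" and "knot ?k'"
    using knot_diag_sim[OF assms] by (simp_all add: eqv_sim_def)
  moreover have "bridge_position ?k'"
    unfolding bridge_position_def using split k
    by (intro exI[of _ "Tens (Id []) C"] exI[of _ R] exI[of _ "tcod C"])
      (auto simp: bridge_split_def typed_iff_welltyped)
  ultimately show ?thesis
    by blast
qed

end
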